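(* A flag $Z=(g,V)$ is a sudoku flag and subsquares of $R(M_Z)$ are latin squares if and only if $Z$ can be written $$ Z=\left[ \begin{array}{ccc} 1 & 0 & 0 \\ 0 & 1 & 1 \\ a & b & 0 \\ c & d & \beta \end{array} \right], $$ where $b$ and $\beta$ are nonzero and $\Gamma =\begin{pmatrix} a & b\\c &d \end{pmatrix}$ is nonsingular.
   Context: Let $\mathbb F$ be the finite field of order $q$. Locations of a sudoku solution of order $q^2$ are identified with $\mathbb F^4$: location $x_1x_2x_3x_4$ lies in large row $x_1$, row $x_2$ within that large row, large column $x_3$, column $x_4$ within that large column. A two-dimensional subspace $g\subset\mathbb F^4$ generates a (parallel-type) linear sudoku solution, in which the set of locations of each symbol is a coset of $g$, precisely when $g$ meets each of $\langle 1000,0100\rangle$, $\langle 0010,0001\rangle$, $\langle 0100,0001\rangle$ trivially. A flag is a pair $Z=(g,V)$ of subspaces of $\mathbb F^4$ with $\dim g=2$, $\dim V=3$, $g\subset V$; it is a sudoku flag if $g$ generates a linear sudoku solution. A sudoku flag generates a linear sudoku solution $M_Z$ with symbols $\{0,\dots,q^2-1\}$ (written in base $q$ as radix digit and units digit) such that each coset of $g$ houses exactly one symbol and each coset of $V$ houses exactly one radix digit. $R(M_Z)$, the radix solution, is the square of radix digits of the symbols of $M_Z$. The notation $[v_1\ v_2\ v_3]$ denotes the flag $(\langle v_1,v_2\rangle,\langle v_1,v_2,v_3\rangle)$, with the $v_i$ written as columns. *)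

theory Defs
  imports "HOL-Analysis.Analysis"
begin

text \<open>Locations of a sudoku of order q^2 are F^4, modelled as 'a^4 over a finite field 'a.
  Coordinates x1 x2 x3 x4 are the components 1,2,3,4.\<close>

definition vec4 :: "'a \<Rightarrow> 'a \<Rightarrow> 'a \<Rightarrow> 'a \<Rightarrow> 'a ^ 4" where
  "vec4 x1 x2 x3 x4 = (\<chi> i. if i = 1 then x1 else if i = 2 then x2 else if i = 3 then x3 else x4)"

definition is_flag :: "('a::field ^ 4) set \<Rightarrow> ('a ^ 4) set \<Rightarrow> bool" where
  "is_flag g V \<longleftrightarrow> vec.subspace g \<and> vec.subspace V \<and> vec.dim g = 2 \<and> vec.dim V = 3 \<and> g \<subseteq> V"

definition generates_linear_sudoku :: "('a::field ^ 4) set \<Rightarrow> bool" where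
  "generates_linear_sudoku g \<longleftrightarrow>
     g \<inter> vec.span {vec4 1 0 0 0, vec4 0 1 0 0} = {0} \<and>
     g \<inter> vec.span {vec4 0 0 1 0, vec4 0 0 0 1} = {0} \<and>
     g \<inter> vec.span {vec4 0 1 0 0, vec4 0 0 0 1} = {0}"

definition sudoku_flag :: "('a::field ^ 4) set \<Rightarrow> ('a ^ 4) set \<Rightarrow> bool" where
  "sudoku_flag g V \<longleftrightarrow> is_flag g V \<and> generates_linear_sudoku g"

text \<open>The radix solution R(M_Z): the radix digit at a location is determined by the coset
  of V containing it, distinct cosets carrying distinct digits.  We identify each radix
  digit with the coset of V housing it (latinness is invariant under relabelling symbols).\<close>
definition radix_square :: "('a::field ^ 4) set \<Rightarrow> 'a ^ 4 \<Rightarrow> ('a ^ 4) set" where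
  "radix_square V x = (\<lambda>v. x + v) ` V"

definition radix_digits :: "('a::field ^ 4) set \<Rightarrow> ('a ^ 4) set set" where
  "radix_digits V = range (radix_square V)"

text \<open>The subsquare in large row x1 and large column x3 is indexed by (x2, x4).  It is a
  latin square if every row (fixed x2) and every column (fixed x4) contains every radix
  digit exactly once.\<close>
definition subsquares_latin :: "('a::field ^ 4) set \<Rightarrow> bool" where
  "subsquares_latin V \<longleftrightarrow>
     (\<forall>x1 x3. (\<forall>x2. bij_betw (\<lambda>x4. radix_square V (vec4 x1 x2 x3 x4)) UNIV (radix_digits V)) \<and>
              (\<forall>x4. bij_betw (\<lambda>x2. radix_square V (vec4 x1 x2 x3 x4)) UNIV (radix_digits V)))"

definition flag_of :: "'a::field ^ 4 \<Rightarrow> 'a ^ 4 \<Rightarrow> 'a ^ 4 \<Rightarrow> ('a ^ 4) set \<times> ('a ^ 4) set" where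
  "flag_of v1 v2 v3 = (vec.span {v1, v2}, vec.span {v1, v2, v3})"

end

theory Submission
  imports Defs
begin

text \<open>
  The plane \<open>g\<close> of a sudoku flag meets \<open>\<langle>e\<^sub>3, e\<^sub>4\<rangle>\<close> trivially, so it projects
  isomorphically onto the first two coordinates and has the basis \<open>(1,0,a,c), (0,1,b,d)\<close>;
  meeting \<open>\<langle>e\<^sub>2, e\<^sub>4\<rangle>\<close> and \<open>\<langle>e\<^sub>1, e\<^sub>2\<rangle>\<close> trivially then says exactly
  \<open>b \<noteq> 0\<close> and \<open>det \<Gamma> \<noteq> 0\<close>.
  A row (column) of a subsquare is an affine line with direction \<open>e\<^sub>4\<close> (\<open>e\<^sub>2\<close>), and such a
  line meets every coset of the hyperplane \<open>V\<close> exactly once iff its direction is not in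
  \<open>V\<close>. So the subsquares are latin iff \<open>e\<^sub>2, e\<^sub>4 \<notin> V\<close>. As \<open>dim V + 2 > 4\<close>, \<open>V\<close> meets
  \<open>\<langle>e\<^sub>2, e\<^sub>4\<rangle>\<close> nontrivially; \<open>e\<^sub>4 \<notin> V\<close> lets us normalise the common vector to
  \<open>(0,1,0,\<beta>)\<close>, and \<open>e\<^sub>2 \<notin> V\<close> gives \<open>\<beta> \<noteq> 0\<close>.
\<close>

lemma vec4_nth [simp]:
  "vec4 x1 x2 x3 x4 $ 1 = x1" "vec4 x1 x2 x3 x4 $ 2 = x2"
  "vec4 x1 x2 x3 x4 $ 3 = x3" "vec4 x1 x2 x3 x4 $ 4 = x4"
  by (simp_all add: vec4_def)

lemma vec4_eq_iff: "(x::'a^4) = y \<longleftrightarrow> x$1 = y$1 \<and> x$2 = y$2 \<and> x$3 = y$3 \<and> x$4 = y$4"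
  by (simp add: vec_eq_iff forall_4)

lemma vec4_arith [simp]:
  "vec4 a b c d + vec4 a' b' c' d' = vec4 (a + a') (b + b') (c + c') (d + d')"
  "vec4 a b c d - vec4 a' b' c' d' = vec4 (a - a') (b - b') (c - c') (d - d')"
  "k *s vec4 a b c d = vec4 (k * a) (k * b) (k * c) (k * d)"
  by (simp_all add: vec4_eq_iff)

lemma zero_vec4: "0 = vec4 0 0 0 0"  (* not [simp]: it would expand every zero vector *)
  by (simp add: vec4_eq_iff)

lemma vec4_inject [simp]: "vec4 a b c d = vec4 a' b' c' d' \<longleftrightarrow> a = a' \<and> b = b' \<and> c = c' \<and> d = d'"
  by (simp add: vec4_eq_iff)

lemma span_pair_eq: "vec.span {x, y} = {s *s x + t *s y | s t. True}"
  by (auto simp: vec.span_insert vec.span_singleton algebra_simps; metis add_diff_cancel_left')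

lemma span_triple_eq: "vec.span {x, y, z} = {s *s x + t *s y + r *s z | s t r. True}"
  by (auto simp: vec.span_insert vec.span_singleton algebra_simps; metis add.assoc add_diff_cancel_left')

lemma dim_span_pair:
  assumes "y \<noteq> 0" "x \<notin> vec.span {y}"
  shows "vec.dim (vec.span {x, y}) = 2"
proof -
  have "vec.independent {x, y}"
    using assms by (intro vec.independent_insertI vec.independent_empty) auto
  moreover have "x \<noteq> y" using assms(2) vec.span_base by blast
  ultimately show ?thesis by (simp add: vec.dim_eq_card_independent)
qed

lemma dim_span_triple:
  assumes "z \<noteq> 0" "y \<notin> vec.span {z}" "x \<notin> vec.span {y, z}"
  shows "vec.dim (vec.span {x, y, z}) = 3"
proof -
  have "vec.independent {x, y, z}"
    using assms by (intro vec.independent_insertI vec.independent_empty) auto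
  moreover have "y \<noteq> z" "x \<noteq> y" "x \<noteq> z" using assms(2,3) vec.span_base by blast+
  ultimately show ?thesis by (simp add: vec.dim_eq_card_independent)
qed

lemma subspace_sums_eq_UNIV:
  fixes S T :: "('a::field ^ 'n) set"
  assumes "vec.subspace S" "vec.subspace T" "S \<inter> T \<subseteq> {0}"
    and "vec.dim S + vec.dim T = CARD('n)"
  shows "{x + y | x y. x \<in> S \<and> y \<in> T} = UNIV"
proof -
  let ?ST = "{x + y | x y. x \<in> S \<and> y \<in> T}"
  have "vec.dim (S \<inter> T) = 0"
    using assms(3) by simp
  then have "vec.dim ?ST = CARD('n)"
    using vec.dim_sums_Int[OF assms(1,2)] assms(4) by linarith
  then show ?thesis
    using vec.subspace_sums[OF assms(1,2)] vec.subspace_UNIV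
    by (intro vec.subspace_dim_equal) (simp_all add: card_cart_basis)
qed

lemma subspace_Int_nonzero:
  fixes S T :: "('a::field ^ 'n) set"
  assumes "vec.subspace S" "vec.subspace T" "CARD('n) < vec.dim S + vec.dim T"
  obtains w where "w \<in> S" "w \<in> T" "w \<noteq> 0"
proof -
  have "vec.dim {x + y | x y. x \<in> S \<and> y \<in> T} \<le> CARD('n)"
    by (rule dim_subset_UNIV_cart_gen)
  then have "vec.dim (S \<inter> T) \<noteq> 0"
    using vec.dim_sums_Int[OF assms(1,2)] assms(3) by linarith
  then show ?thesis
    using that by (auto simp only: vec.dim_eq_0)
qed

lemma radix_square_eq_iff:
  assumes "vec.subspace V"
  shows "radix_square V x = radix_square V y \<longleftrightarrow> x - y \<in> V"
proof
  assume "radix_square V x = radix_square V y"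
  moreover have "x \<in> radix_square V x"
    unfolding radix_square_def using vec.subspace_0[OF assms] by force
  ultimately obtain v where "v \<in> V" "x = y + v" unfolding radix_square_def by auto
  then show "x - y \<in> V" by simp
next
  assume "x - y \<in> V"
  then have "radix_square V x = (\<lambda>v. y + v) ` (\<lambda>v. x - y + v) ` V"
    unfolding radix_square_def image_image by (simp add: algebra_simps)
  also have "(\<lambda>v. x - y + v) ` V = V"
  proof (intro subset_antisym image_subsetI subsetI)
    fix v assume "v \<in> V"
    then show "x - y + v \<in> V" using \<open>x - y \<in> V\<close> vec.subspace_add[OF assms] by blast
    have "v - (x - y) \<in> V" using \<open>v \<in> V\<close> \<open>x - y \<in> V\<close> vec.subspace_diff[OF assms] by blast
    then show "v \<in> (\<lambda>v. x - y + v) ` V" by (force intro: image_eqI)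
  qed
  finally show "radix_square V x = radix_square V y"
    unfolding radix_square_def .
qed

lemma subspace_scale_iff:
  assumes "vec.subspace V" "c \<noteq> 0"
  shows "c *s x \<in> V \<longleftrightarrow> x \<in> V"
  using vec.subspace_scale[OF assms(1), of "c *s x" "inverse c"]
    vec.subspace_scale[OF assms(1), of x c] assms(2) by auto

lemma bij_radix_square_line_iff:
  fixes V :: "('a::field ^ 4) set"
  assumes V: "vec.subspace V" and dim: "vec.dim V = 3"
  shows "bij_betw (\<lambda>t. radix_square V (x + t *s v)) UNIV (radix_digits V) \<longleftrightarrow> v \<notin> V"
proof
  assume "bij_betw (\<lambda>t. radix_square V (x + t *s v)) UNIV (radix_digits V)"
  then have "inj (\<lambda>t. radix_square V (x + t *s v))"
    by (rule bij_betw_imp_inj_on)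
  then have "radix_square V (x + 1 *s v) \<noteq> radix_square V (x + 0 *s v)"
    by (metis injD zero_neq_one)
  then show "v \<notin> V"
    using radix_square_eq_iff[OF V] by auto
next
  assume v: "v \<notin> V"
  have "inj (\<lambda>t. radix_square V (x + t *s v))"
  proof (rule injI)
    fix s t assume "radix_square V (x + s *s v) = radix_square V (x + t *s v)"
    then have "(s - t) *s v \<in> V"
      using radix_square_eq_iff[OF V] by (simp add: algebra_simps)
    with v show "s = t"
      using subspace_scale_iff[OF V, of "s - t"] by auto
  qed
  moreover have "radix_square V y \<in> range (\<lambda>t. radix_square V (x + t *s v))" for y
  proof -
    have "V \<inter> vec.span {v} \<subseteq> {0}"
    proof
      fix w assume "w \<in> V \<inter> vec.span {v}"
      then obtain k where "w \<in> V" "w = k *s v" by (auto simp: vec.span_singleton)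
      with v show "w \<in> {0}" using subspace_scale_iff[OF V, of k] by auto
    qed
    moreover have "v \<noteq> 0" using v vec.subspace_0[OF V] by blast
    ultimately have "{a + b | a b. a \<in> V \<and> b \<in> vec.span {v}} = UNIV"
      using dim by (intro subspace_sums_eq_UNIV[OF V]) auto
    then obtain a t where "a \<in> V" "y - x = a + t *s v"
      by (fastforce simp: vec.span_singleton)
    then have "radix_square V (x + t *s v) = radix_square V y"
      using radix_square_eq_iff[OF V] vec.subspace_neg[OF V] by (simp add: algebra_simps)
    then show ?thesis by blast
  qed
  ultimately show "bij_betw (\<lambda>t. radix_square V (x + t *s v)) UNIV (radix_digits V)"
    unfolding bij_betw_def radix_digits_def by blast
qed

lemma subsquares_latin_iff:
  fixes V :: "('a::field ^ 4) set"
  assumes "vec.subspace V" "vec.dim V = 3"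
  shows "subsquares_latin V \<longleftrightarrow> vec4 0 1 0 0 \<notin> V \<and> vec4 0 0 0 1 \<notin> V"
proof -
  have line: "bij_betw (\<lambda>t. radix_square V (x + t *s v)) UNIV (radix_digits V) \<longleftrightarrow> v \<notin> V"
    for x v :: "'a ^ 4"
    by (rule bij_radix_square_line_iff[OF assms])
  have rows_cols: "(\<lambda>x4. radix_square V (vec4 x1 x2 x3 x4))
      = (\<lambda>t. radix_square V (vec4 x1 x2 x3 0 + t *s vec4 0 0 0 1))"
    "(\<lambda>x2. radix_square V (vec4 x1 x2 x3 x4))
      = (\<lambda>t. radix_square V (vec4 x1 0 x3 x4 + t *s vec4 0 1 0 0))" for x1 x2 x3 x4 :: 'a
    by simp_all
  show ?thesis
    unfolding subsquares_latin_def rows_cols line by auto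
qed

lemma span_eq_subspace:
  assumes "vec.subspace S" "B \<subseteq> S" "vec.dim S \<le> vec.dim (vec.span B)"
  shows "vec.span B = S"
  using assms vec.span_minimal[OF assms(2,1)] by (intro vec.subspace_dim_equal) simp_all

lemma ex_mem_with_leading_coords:
  fixes g :: "('a::field ^ 4) set"
  assumes "vec.subspace g" "vec.dim g = 2"
    and "g \<inter> vec.span {vec4 0 0 1 0, vec4 0 0 0 1} = {0}"
  shows "\<exists>y3 y4. vec4 x1 x2 y3 y4 \<in> g"
proof -
  let ?W = "vec.span {vec4 0 0 1 0, vec4 (0::'a) 0 0 1}"
  have "vec.dim ?W = 2"
    by (rule dim_span_pair) (auto simp: vec.span_singleton zero_vec4)
  then have "{u + w | u w. u \<in> g \<and> w \<in> ?W} = UNIV"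
    using assms by (intro subspace_sums_eq_UNIV) auto
  then have "vec4 x1 x2 0 0 \<in> {u + w | u w. u \<in> g \<and> w \<in> ?W}"
    by simp
  then obtain u w where "u \<in> g" "w \<in> ?W" "vec4 x1 x2 0 0 = u + w"
    by blast
  moreover obtain s t where "w = vec4 0 0 s t"
    using \<open>w \<in> ?W\<close> by (auto simp: span_pair_eq)
  ultimately have "u = vec4 x1 x2 (- s) (- t)"
    by (simp add: vec4_eq_iff eq_neg_iff_add_eq_0)
  with \<open>u \<in> g\<close> show ?thesis by blast
qed

lemma ex_mem_vec4_0_1_0:
  fixes V :: "('a::field ^ 4) set"
  assumes V: "vec.subspace V" "vec.dim V = 3" and e4: "vec4 0 0 0 1 \<notin> V"
  shows "\<exists>\<beta>. vec4 0 1 0 \<beta> \<in> V"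
proof -
  let ?W = "vec.span {vec4 0 1 0 0, vec4 (0::'a) 0 0 1}"
  have "vec.dim ?W = 2"
    by (rule dim_span_pair) (auto simp: vec.span_singleton zero_vec4)
  then have "CARD(4) < vec.dim V + vec.dim ?W"
    using V(2) by simp
  then obtain w where w: "w \<in> V" "w \<in> ?W" "w \<noteq> 0"
    by (rule subspace_Int_nonzero[OF V(1) vec.subspace_span])
  then obtain p r where w_eq: "w = vec4 0 p 0 r"
    by (auto simp: span_pair_eq)
  have "p \<noteq> 0"
  proof
    assume "p = 0"
    with w(3) w_eq have "r \<noteq> 0"
      by (simp add: zero_vec4)
    with \<open>p = 0\<close> w_eq have "inverse r *s w = vec4 0 0 0 1"
      by simp
    then show False
      using e4 vec.subspace_scale[OF V(1) w(1)] by metis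
  qed
  with w_eq have "inverse p *s w = vec4 0 1 0 (r / p)"
    by (simp add: field_simps)
  then show ?thesis
    using vec.subspace_scale[OF V(1) w(1)] by metis
qed

lemma nonsingular_2x2_kernel:
  fixes a b c d s t :: "'a::field"
  assumes "a * d - b * c \<noteq> 0" "s * a + t * b = 0" "s * c + t * d = 0"
  shows "s = 0 \<and> t = 0"
proof -
  have "s * (a * d - b * c) = d * (s * a + t * b) - b * (s * c + t * d)"
    "t * (a * d - b * c) = a * (s * c + t * d) - c * (s * a + t * b)"
    by (simp_all add: algebra_simps)
  then show ?thesis
    using assms by simp
qed

lemma normal_form_coeffs_if_generates_linear_sudoku:
  fixes a b c d :: "'a::field"
  assumes "generates_linear_sudoku (vec.span {vec4 1 0 a c, vec4 0 1 b d})"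
  shows "b \<noteq> 0" and "a * d - b * c \<noteq> 0"
proof -
  let ?g = "vec.span {vec4 1 0 a c, vec4 0 1 b d}"
  have g: "x \<in> ?g \<longleftrightarrow> (\<exists>s t. x = vec4 s t (s * a + t * b) (s * c + t * d))" for x
    by (auto simp: span_pair_eq)
  have W12: "?g \<inter> vec.span {vec4 1 0 0 0, vec4 0 1 0 0} = {0}"
    and W24: "?g \<inter> vec.span {vec4 0 1 0 0, vec4 0 0 0 1} = {0}"
    using assms unfolding generates_linear_sudoku_def by auto
  show "b \<noteq> 0"
  proof
    assume "b = 0"
    then have "vec4 0 1 0 d \<in> ?g \<inter> vec.span {vec4 0 1 0 0, vec4 0 0 0 1}"
      by (simp add: g span_pair_eq)
    with W24 show False
      by (simp add: zero_vec4)
  qed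
  show "a * d - b * c \<noteq> 0"
  proof
    assume "a * d - b * c = 0"
    then have "vec4 b (- a) 0 0 \<in> ?g \<inter> vec.span {vec4 1 0 0 0, vec4 0 1 0 0}"
      by (simp add: g span_pair_eq algebra_simps)
    with W12 \<open>b \<noteq> 0\<close> show False
      by (simp add: zero_vec4)
  qed
qed

lemma generates_linear_sudoku_normal_form:
  fixes a b c d :: "'a::field"
  assumes b: "b \<noteq> 0" and det: "a * d - b * c \<noteq> 0"
  shows "generates_linear_sudoku (vec.span {vec4 1 0 a c, vec4 0 1 b d})"
proof -
  let ?g = "vec.span {vec4 1 0 a c, vec4 0 1 b d}"
  have g: "x \<in> ?g \<longleftrightarrow> (\<exists>s t. x = vec4 s t (s * a + t * b) (s * c + t * d))" for x
    by (auto simp: span_pair_eq)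
  have "x = 0" if x: "x \<in> ?g" and W: "x \<in> vec.span {vec4 1 0 0 0, vec4 0 1 0 0}" for x
  proof -
    obtain s t where x_eq: "x = vec4 s t (s * a + t * b) (s * c + t * d)"
      using x g by blast
    moreover obtain p q where "x = vec4 p q 0 0"
      using W by (auto simp: span_pair_eq)
    ultimately have "s * a + t * b = 0" "s * c + t * d = 0"
      by simp_all
    then have "s = 0" "t = 0"
      using nonsingular_2x2_kernel[OF det] by blast+
    with x_eq show ?thesis
      by (simp add: zero_vec4)
  qed
  moreover have "x = 0" if x: "x \<in> ?g" and W: "x \<in> vec.span {vec4 0 0 1 0, vec4 0 0 0 1}" for x
  proof -
    obtain s t where x_eq: "x = vec4 s t (s * a + t * b) (s * c + t * d)"
      using x g by blast
    moreover obtain p q where "x = vec4 0 0 p q"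
      using W by (auto simp: span_pair_eq)
    ultimately show ?thesis
      by (simp add: zero_vec4)
  qed
  moreover have "x = 0" if x: "x \<in> ?g" and W: "x \<in> vec.span {vec4 0 1 0 0, vec4 0 0 0 1}" for x
  proof -
    obtain s t where x_eq: "x = vec4 s t (s * a + t * b) (s * c + t * d)"
      using x g by blast
    moreover obtain p q where "x = vec4 0 p 0 q"
      using W by (auto simp: span_pair_eq)
    ultimately show ?thesis
      using b by (auto simp: zero_vec4)
  qed
  ultimately show ?thesis
    unfolding generates_linear_sudoku_def using vec.span_zero by blast
qed

lemma unit_vectors_notin_normal_form:
  fixes a b c d \<beta> :: "'a::field"
  assumes "b \<noteq> 0" "\<beta> \<noteq> 0"
  shows "vec4 0 1 0 0 \<notin> vec.span {vec4 1 0 a c, vec4 0 1 b d, vec4 0 1 0 \<beta>}"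
    and "vec4 0 0 0 1 \<notin> vec.span {vec4 1 0 a c, vec4 0 1 b d, vec4 0 1 0 \<beta>}"
  using assms by (auto simp: span_triple_eq)

lemma normal_form_if_sudoku_flag_latin:
  fixes g V :: "('a::field ^ 4) set"
  assumes flag: "is_flag g V" and sudoku: "generates_linear_sudoku g"
    and latin: "subsquares_latin V"
  shows "\<exists>a b c d \<beta>. (g, V) = flag_of (vec4 1 0 a c) (vec4 0 1 b d) (vec4 0 1 0 \<beta>) \<and>
    b \<noteq> 0 \<and> \<beta> \<noteq> 0 \<and> a * d - b * c \<noteq> 0"
proof -
  have g: "vec.subspace g" "vec.dim g = 2" and V: "vec.subspace V" "vec.dim V = 3"
    and "g \<subseteq> V"
    using flag unfolding is_flag_def by auto
  have W34: "g \<inter> vec.span {vec4 0 0 1 0, vec4 0 0 0 1} = {0}"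
    using sudoku unfolding generates_linear_sudoku_def by auto
  have e2: "vec4 0 1 0 0 \<notin> V" and e4: "vec4 0 0 0 1 \<notin> V"
    using latin subsquares_latin_iff[OF V] by auto
  obtain a c where v1: "vec4 1 0 a c \<in> g"
    using ex_mem_with_leading_coords[OF g W34] by blast
  obtain b d where v2: "vec4 0 1 b d \<in> g"
    using ex_mem_with_leading_coords[OF g W34] by blast
  obtain \<beta> where v3: "vec4 0 1 0 \<beta> \<in> V"
    using ex_mem_vec4_0_1_0[OF V e4] by blast
  have "\<beta> \<noteq> 0"
    using v3 e2 by auto
  have "vec.dim (vec.span {vec4 1 0 a c, vec4 0 1 b d}) = 2"
    by (rule dim_span_pair) (auto simp: vec.span_singleton zero_vec4)
  then have g_eq: "vec.span {vec4 1 0 a c, vec4 0 1 b d} = g"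
    using v1 v2 g by (intro span_eq_subspace) auto
  then have "b \<noteq> 0" "a * d - b * c \<noteq> 0"
    using normal_form_coeffs_if_generates_linear_sudoku sudoku by metis+
  then have "vec.dim (vec.span {vec4 1 0 a c, vec4 0 1 b d, vec4 0 1 0 \<beta>}) = 3"
    using \<open>\<beta> \<noteq> 0\<close>
    by (intro dim_span_triple) (auto simp: vec.span_singleton span_pair_eq zero_vec4)
  then have V_eq: "vec.span {vec4 1 0 a c, vec4 0 1 b d, vec4 0 1 0 \<beta>} = V"
    using v1 v2 v3 \<open>g \<subseteq> V\<close> V by (intro span_eq_subspace) auto
  show ?thesis
    using g_eq V_eq \<open>b \<noteq> 0\<close> \<open>\<beta> \<noteq> 0\<close> \<open>a * d - b * c \<noteq> 0\<close>
    unfolding flag_of_def by blast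
qed

theorem proposition4p5:
  fixes g V :: "('a::{finite, field} ^ 4) set"
  assumes "is_flag g V"
  shows "(sudoku_flag g V \<and> subsquares_latin V) \<longleftrightarrow>
    (\<exists>a b c d \<beta> :: 'a.
        (g, V) = flag_of (vec4 1 0 a c) (vec4 0 1 b d) (vec4 0 1 0 \<beta>) \<and>
        b \<noteq> 0 \<and> \<beta> \<noteq> 0 \<and> a * d - b * c \<noteq> 0)"
proof
  assume "sudoku_flag g V \<and> subsquares_latin V"
  then show "\<exists>a b c d \<beta>. (g, V) = flag_of (vec4 1 0 a c) (vec4 0 1 b d) (vec4 0 1 0 \<beta>) \<and>
      b \<noteq> 0 \<and> \<beta> \<noteq> 0 \<and> a * d - b * c \<noteq> 0"
    using normal_form_if_sudoku_flag_latin[OF assms] unfolding sudoku_flag_def by blast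
next
  assume "\<exists>a b c d \<beta>. (g, V) = flag_of (vec4 1 0 a c) (vec4 0 1 b d) (vec4 0 1 0 \<beta>) \<and>
      b \<noteq> 0 \<and> \<beta> \<noteq> 0 \<and> a * d - b * c \<noteq> 0"
  then obtain a b c d \<beta> :: 'a
    where g: "g = vec.span {vec4 1 0 a c, vec4 0 1 b d}"
      and V: "V = vec.span {vec4 1 0 a c, vec4 0 1 b d, vec4 0 1 0 \<beta>}"
      and "b \<noteq> 0" "\<beta> \<noteq> 0" "a * d - b * c \<noteq> 0"
    unfolding flag_of_def by blast
  have "vec.subspace V" "vec.dim V = 3"
    using assms unfolding is_flag_def by auto
  then have "subsquares_latin V"
    using subsquares_latin_iff unit_vectors_notin_normal_form[OF \<open>b \<noteq> 0\<close> \<open>\<beta> \<noteq> 0\<close>]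
    unfolding V by blast
  then show "sudoku_flag g V \<and> subsquares_latin V"
    using assms generates_linear_sudoku_normal_form[OF \<open>b \<noteq> 0\<close> \<open>a * d - b * c \<noteq> 0\<close>]
    unfolding sudoku_flag_def g by blast
qed

end
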